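(* Consider the two-link parallel network with unit demand and latencies $\ell_1(x_1)=x_1^2$ and $\ell_2(x_2)=0$. Then there is no uncapped subgame perfect Nash equilibrium, i.e. $\mathcal{T}(\infty)=\emptyset$, and moreover $\mathcal{T}(c)=\emptyset$ for every price cap $c\ge\frac12$.
   Context: Flows $x\in\mathbb{R}^2_+$ with $x_1+x_2=1$. For tolls $t\in\mathbb{R}^2_+$, $x(t)$ is the unique Wardrop equilibrium for $t$ (for all $i,j$ with $x_i>0$: $\ell_i(x_i)+t_i\le\ell_j(x_j)+t_j$). Profit $\Pi_i(t)=t_ix_i(t)$. For $c\in\mathbb{R}_+$, $\mathcal{T}(c)$ is the set of toll vectors with $0\le t_i\le c$ such that for every $i$ and every $t'_i\in[0,c]$, $\Pi_i(t_i,t_{-i})\ge\Pi_i(t'_i,t_{-i})$ (flow recomputed); $\mathcal{T}(\infty)$ is the same without upper bound. *)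

theory Defs
  imports Complex_Main
begin

datatype link = L1 | L2

definition feasible :: "(link \<Rightarrow> real) \<Rightarrow> bool" where
  "feasible x \<longleftrightarrow> (\<forall>i. x i \<ge> 0) \<and> x L1 + x L2 = 1"

definition wardrop :: "(link \<Rightarrow> real \<Rightarrow> real) \<Rightarrow> (link \<Rightarrow> real) \<Rightarrow> (link \<Rightarrow> real) \<Rightarrow> bool" where
  "wardrop l t x \<longleftrightarrow> feasible x \<and>
     (\<forall>i j. x i > 0 \<longrightarrow> l i (x i) + t i \<le> l j (x j) + t j)"

text \<open>The (unique) Wardrop equilibrium flow x(t).\<close>
definition eqflow :: "(link \<Rightarrow> real \<Rightarrow> real) \<Rightarrow> (link \<Rightarrow> real) \<Rightarrow> (link \<Rightarrow> real)" where
  "eqflow l t = (THE x. wardrop l t x)"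

definition profit :: "(link \<Rightarrow> real \<Rightarrow> real) \<Rightarrow> link \<Rightarrow> (link \<Rightarrow> real) \<Rightarrow> real" where
  "profit l i t = t i * eqflow l t i"

definition tollNE :: "(link \<Rightarrow> real \<Rightarrow> real) \<Rightarrow> real set \<Rightarrow> (link \<Rightarrow> real) set" where
  "tollNE l S = {t. (\<forall>i. t i \<in> S) \<and>
      (\<forall>i t'. t' \<in> S \<longrightarrow> profit l i t \<ge> profit l i (t(i := t')))}"

definition Tcap :: "(link \<Rightarrow> real \<Rightarrow> real) \<Rightarrow> real \<Rightarrow> (link \<Rightarrow> real) set" where
  "Tcap l c = tollNE l {0..c}"

definition Tinf :: "(link \<Rightarrow> real \<Rightarrow> real) \<Rightarrow> (link \<Rightarrow> real) set" where
  "Tinf l = tollNE l {0..}"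

end

theory Submission
  imports Defs
begin

text \<open>With tolls \<open>t\<^sub>1, t\<^sub>2\<close> the equilibrium flow on link 1 is
  \<open>min 1 (sqrt (max 0 (t\<^sub>2 - t\<^sub>1)))\<close>.
  Both owners can always guarantee a positive profit, so both tolls are positive and the flow
  \<open>r\<close> on link 1 is interior, with \<open>t\<^sub>2 - t\<^sub>1 = r\<^sup>2\<close>. Undercutting by owner 2 to \<open>t\<^sub>1\<close> shows \<open>t\<^sub>2 \<le> r\<close>.
  Owner 1 maximises \<open>(t\<^sub>2 - y\<^sup>2) y\<close> over the flow \<open>y\<close> it attracts, giving \<open>t\<^sub>2 = 3 r\<^sup>2\<close>, hence
  \<open>r \<le> 1/3\<close> and \<open>t\<^sub>2 \<le> 1/3\<close>; so owner 2 can move its toll freely near \<open>t\<^sub>2\<close> below the cap \<open>1/2\<close>,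
  and maximising \<open>(t\<^sub>1 + p\<^sup>2)(1 - p)\<close> gives \<open>r = 2/5\<close>, a contradiction.\<close>

definition quad_latency :: "link \<Rightarrow> real \<Rightarrow> real" where
  "quad_latency i z = (if i = L1 then z ^ 2 else 0)"

definition share1 :: "real \<Rightarrow> real \<Rightarrow> real" where
  "share1 t1 t2 = min 1 (sqrt (max 0 (t2 - t1)))"

definition quad_flow :: "(link \<Rightarrow> real) \<Rightarrow> link \<Rightarrow> real" where
  "quad_flow t i = (if i = L1 then share1 (t L1) (t L2) else 1 - share1 (t L1) (t L2))"

lemma all_link_iff: "(\<forall>i. P i) \<longleftrightarrow> P L1 \<and> P L2"
  by (metis link.exhaust)

lemma share1_nonneg: "0 \<le> share1 t1 t2"
  and share1_le_one: "share1 t1 t2 \<le> 1"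
  by (auto simp: share1_def)

lemma share1_eq_0_iff: "share1 t1 t2 = 0 \<longleftrightarrow> t2 \<le> t1"
  by (auto simp: share1_def min_def max_def)

lemma share1_eq_1_iff: "share1 t1 t2 = 1 \<longleftrightarrow> t2 - t1 \<ge> 1"
  by (auto simp: share1_def min_def)

lemma share1_eqI: "0 < y \<Longrightarrow> y \<le> 1 \<Longrightarrow> t2 - t1 = y ^ 2 \<Longrightarrow> share1 t1 t2 = y"
  by (simp add: share1_def)

lemma share1_interior_sq:
  assumes "0 < share1 t1 t2" "share1 t1 t2 < 1"
  shows "(share1 t1 t2) ^ 2 = t2 - t1"
  using assms by (auto simp: share1_def min_def max_def split: if_splits)

lemma share1_pos_imp: "share1 t1 t2 > 0 \<Longrightarrow> (share1 t1 t2) ^ 2 + t1 \<le> t2"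
proof -
  assume "share1 t1 t2 > 0"
  then have d: "t2 - t1 > 0" by (auto simp: share1_def)
  then have "share1 t1 t2 \<le> sqrt (t2 - t1)" by (simp add: share1_def)
  then have "(share1 t1 t2) ^ 2 \<le> (sqrt (t2 - t1)) ^ 2"
    using share1_nonneg by (intro power_mono)
  with d show ?thesis by simp
qed

lemma share1_lt_1_imp: "share1 t1 t2 < 1 \<Longrightarrow> t2 \<le> (share1 t1 t2) ^ 2 + t1"
  by (cases "t2 \<le> t1") (auto simp: share1_def min_def add_increasing)

lemma wardrop_quad_flow: "wardrop quad_latency t (quad_flow t)"
  using share1_pos_imp[of "t L1" "t L2"] share1_lt_1_imp[of "t L1" "t L2"]
    share1_nonneg[of "t L1" "t L2"] share1_le_one[of "t L1" "t L2"]
  unfolding wardrop_def feasible_def all_link_iff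
  by (simp add: quad_flow_def quad_latency_def)

lemma wardrop_quad_latency_unique:
  assumes "wardrop quad_latency t x"
  shows "x = quad_flow t"
proof -
  let ?a = "x L1"
  have feas: "x L2 = 1 - ?a" "0 \<le> ?a" "?a \<le> 1"
    using assms by (auto simp: wardrop_def feasible_def all_link_iff)
  have L1_used: "?a > 0 \<Longrightarrow> ?a ^ 2 + t L1 \<le> t L2"
    and L2_used: "?a < 1 \<Longrightarrow> t L2 \<le> ?a ^ 2 + t L1"
    using assms feas unfolding wardrop_def quad_latency_def by (auto simp: all_link_iff)
  have "?a = share1 (t L1) (t L2)"
  proof -
    consider "?a = 0" | "?a = 1" | "0 < ?a" "?a < 1"
      using feas by linarith
    then show ?thesis
    proof cases
      case 1
      with L2_used show ?thesis by (simp add: share1_eq_0_iff)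
    next
      case 2
      with L1_used show ?thesis by (simp add: share1_eq_1_iff)
    next
      case 3
      with L1_used L2_used show ?thesis by (intro share1_eqI[symmetric]) fastforce+
    qed
  qed
  with feas show ?thesis
    unfolding quad_flow_def by (metis link.exhaust)
qed

lemma eqflow_quad_latency: "eqflow quad_latency t = quad_flow t"
  unfolding eqflow_def using wardrop_quad_flow wardrop_quad_latency_unique by blast

definition best_response1 :: "real set \<Rightarrow> real \<Rightarrow> real \<Rightarrow> bool" where
  "best_response1 S t1 t2 \<longleftrightarrow> t1 \<in> S \<and> (\<forall>s\<in>S. s * share1 s t2 \<le> t1 * share1 t1 t2)"

definition best_response2 :: "real set \<Rightarrow> real \<Rightarrow> real \<Rightarrow> bool" where
  "best_response2 S t1 t2 \<longleftrightarrow>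
     t2 \<in> S \<and> (\<forall>u\<in>S. u * (1 - share1 t1 u) \<le> t2 * (1 - share1 t1 t2))"

lemma tollNE_quad_latency_best_responses:
  assumes "t \<in> tollNE quad_latency S"
  shows "best_response1 S (t L1) (t L2)" "best_response2 S (t L1) (t L2)"
proof -
  have "t L1 \<in> S" "t L2 \<in> S" and
    dev: "\<And>i t'. t' \<in> S \<Longrightarrow> profit quad_latency i (t(i := t')) \<le> profit quad_latency i t"
    using assms by (auto simp: tollNE_def)
  then show "best_response1 S (t L1) (t L2)" "best_response2 S (t L1) (t L2)"
    using dev[of _ L1] dev[of _ L2]
    by (simp_all add: best_response1_def best_response2_def profit_def
        eqflow_quad_latency quad_flow_def)
qed

lemma best_response1_profit_pos:
  assumes br: "best_response1 S t1 t2"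
    and down: "\<And>y. 0 \<le> y \<Longrightarrow> y \<le> t2 \<Longrightarrow> y \<in> S" and "t2 > 0"
  shows "t1 * share1 t1 t2 > 0"
proof -
  have "t2 / 2 \<in> S" using down \<open>t2 > 0\<close> by simp
  moreover have "t2 / 2 * share1 (t2 / 2) t2 > 0"
    using \<open>t2 > 0\<close> share1_nonneg[of "t2/2" t2] share1_eq_0_iff[of "t2/2" t2]
    by (simp add: order_less_le)
  ultimately show ?thesis using br by (force simp: best_response1_def)
qed

lemma best_response2_profit_pos:
  assumes br: "best_response2 S t1 t2" and "t1 \<in> S" "1/4 \<in> S" "t1 \<ge> 0"
  shows "t2 * (1 - share1 t1 t2) > 0"
proof (cases "t1 > 0")
  case True
  have "t1 * (1 - share1 t1 t1) > 0" using True share1_eq_0_iff[of t1 t1] by simp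
  with br \<open>t1 \<in> S\<close> show ?thesis by (force simp: best_response2_def)
next
  case False
  then have "t1 = 0" using \<open>t1 \<ge> 0\<close> by simp
  moreover have "share1 0 (1/4) = 1/2" by (rule share1_eqI) (auto simp: power2_eq_square)
  ultimately show ?thesis using br \<open>1/4 \<in> S\<close> by (force simp: best_response2_def)
qed

text \<open>Undercutting to the rival's toll takes the whole demand.\<close>

lemma best_response2_le_share1:
  assumes br: "best_response2 S t1 t2" and "t1 \<in> S"
    and r: "share1 t1 t2 = r" "r > 0" "t2 - t1 = r ^ 2"
  shows "t2 \<le> r"
proof -
  have "t1 \<le> t2 * (1 - r)"
    using br \<open>t1 \<in> S\<close> r(1) share1_eq_0_iff[of t1 t1] by (force simp: best_response2_def)
  then have "r * t2 \<le> r * r" using r(3) by (simp add: power2_eq_square algebra_simps)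
  with \<open>r > 0\<close> show ?thesis by simp
qed

text \<open>Owner 1 attracting flow \<open>y\<close> means charging \<open>t\<^sub>2 - y\<^sup>2\<close>, which makes \<open>r\<close> a local maximiser of \<open>(t\<^sub>2 - y\<^sup>2) y\<close>.\<close>

lemma best_response1_foc:
  assumes br: "best_response1 S t1 t2"
    and down: "\<And>y. 0 \<le> y \<Longrightarrow> y \<le> t2 \<Longrightarrow> y \<in> S"
    and r: "share1 t1 t2 = r" "0 < r" "r < 1" "t2 - t1 = r ^ 2" and "t1 > 0"
  shows "t2 = 3 * r ^ 2"
proof -
  define F where "F y = (t2 - y ^ 2) * y" for y :: real
  have "r < sqrt t2"
    using r \<open>t1 > 0\<close> real_less_rsqrt[of r t2] by simp
  have "t2 - 3 * r ^ 2 = 0"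
  proof (rule DERIV_local_max)
    show "(F has_real_derivative t2 - 3 * r ^ 2) (at r)"
      unfolding F_def by (auto intro!: derivative_eq_intros simp: power2_eq_square algebra_simps)
    show "0 < min (min r (1 - r)) (sqrt t2 - r)" using r \<open>r < sqrt t2\<close> by simp
    show "\<forall>y. \<bar>r - y\<bar> < min (min r (1 - r)) (sqrt t2 - r) \<longrightarrow> F y \<le> F r"
    proof (intro allI impI)
      fix y assume "\<bar>r - y\<bar> < min (min r (1 - r)) (sqrt t2 - r)"
      then have y: "0 < y" "y < 1" "y < sqrt t2" by auto
      then have "y ^ 2 < t2" using real_sqrt_less_iff[of "y ^ 2" t2] by simp
      then have "t2 - y ^ 2 \<in> S" using down by simp
      moreover have "share1 (t2 - y ^ 2) t2 = y" using y by (intro share1_eqI) auto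
      ultimately have "(t2 - y ^ 2) * y \<le> t1 * r" using br r(1) by (force simp: best_response1_def)
      moreover have "t1 = t2 - r ^ 2" using r(4) by simp
      ultimately show "F y \<le> F r" by (simp add: F_def)
    qed
  qed
  then show ?thesis by simp
qed

text \<open>Owner 2 leaving flow \<open>1 - p\<close> means charging \<open>t\<^sub>1 + p\<^sup>2\<close>; this stays below the cap \<open>1/2\<close>
  for \<open>p\<close> near \<open>r\<close> because \<open>t\<^sub>2 < 1/2\<close>.\<close>

lemma best_response2_foc:
  assumes br: "best_response2 S t1 t2" and half: "{0..1/2} \<subseteq> S"
    and r: "share1 t1 t2 = r" "0 < r" "r < 1" "t2 - t1 = r ^ 2"
    and "0 \<le> t1" "t2 < 1/2"
  shows "2 * r * (1 - r) = t1 + r ^ 2"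
proof -
  define G where "G p = (t1 + p ^ 2) * (1 - p)" for p :: real
  have "r < sqrt (1/2 - t1)"
    using r \<open>t2 < 1/2\<close> real_less_rsqrt[of r "1/2 - t1"] by simp
  have "2 * r * (1 - r) - (t1 + r ^ 2) = 0"
  proof (rule DERIV_local_max)
    show "(G has_real_derivative 2 * r * (1 - r) - (t1 + r ^ 2)) (at r)"
      unfolding G_def by (auto intro!: derivative_eq_intros simp: power2_eq_square algebra_simps)
    show "0 < min (min r (1 - r)) (sqrt (1/2 - t1) - r)" using r \<open>r < sqrt (1/2 - t1)\<close> by simp
    show "\<forall>p. \<bar>r - p\<bar> < min (min r (1 - r)) (sqrt (1/2 - t1) - r) \<longrightarrow> G p \<le> G r"
    proof (intro allI impI)
      fix p assume "\<bar>r - p\<bar> < min (min r (1 - r)) (sqrt (1/2 - t1) - r)"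
      then have p: "0 < p" "p < 1" "p < sqrt (1/2 - t1)" by auto
      then have "p ^ 2 < 1/2 - t1" using real_sqrt_less_iff[of "p ^ 2" "1/2 - t1"] by simp
      then have "t1 + p ^ 2 \<in> S" using half \<open>0 \<le> t1\<close> by auto
      moreover have "share1 t1 (t1 + p ^ 2) = p" using p by (intro share1_eqI) auto
      ultimately have "(t1 + p ^ 2) * (1 - p) \<le> t2 * (1 - r)"
        using br r(1) by (force simp: best_response2_def)
      moreover have "t2 = t1 + r ^ 2" using r(4) by simp
      ultimately show "G p \<le> G r" by (simp add: G_def)
    qed
  qed
  then show ?thesis by simp
qed

lemma tollNE_quad_latency_empty:
  assumes nonneg: "S \<subseteq> {0..}" and half: "{0..1/2} \<subseteq> S"
    and down: "\<And>x y. x \<in> S \<Longrightarrow> 0 \<le> y \<Longrightarrow> y \<le> x \<Longrightarrow> y \<in> S"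
  shows "tollNE quad_latency S = {}"
proof (rule ccontr)
  assume "tollNE quad_latency S \<noteq> {}"
  then obtain t where "t \<in> tollNE quad_latency S" by blast
  define t1 t2 r where "t1 = t L1" and "t2 = t L2" and "r = share1 t1 t2"
  have br1: "best_response1 S t1 t2" and br2: "best_response2 S t1 t2"
    using tollNE_quad_latency_best_responses[OF \<open>t \<in> _\<close>] by (simp_all add: t1_def t2_def)
  have S: "t1 \<in> S" "t2 \<in> S" using br1 br2 by (simp_all add: best_response1_def best_response2_def)
  then have "t1 \<ge> 0" "t2 \<ge> 0" using nonneg by auto
  have "1/4 \<in> S" using half by (simp add: subset_iff)
  then have "t2 * (1 - r) > 0"
    unfolding r_def using best_response2_profit_pos[OF br2 S(1) _ \<open>t1 \<ge> 0\<close>] by simp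
  then have "t2 > 0" "r < 1"
    using \<open>t2 \<ge> 0\<close> by (auto simp: zero_less_mult_iff)
  have "t1 * r > 0"
    unfolding r_def using best_response1_profit_pos[OF br1 down[OF S(2)] \<open>t2 > 0\<close>] by simp
  then have "t1 > 0" "r > 0"
    using \<open>t1 \<ge> 0\<close> share1_nonneg[of t1 t2] by (auto simp: r_def zero_less_mult_iff)
  have sq: "t2 - t1 = r ^ 2"
    using share1_interior_sq \<open>r > 0\<close> \<open>r < 1\<close> by (simp add: r_def)
  note interior = r_def[symmetric] \<open>r > 0\<close> \<open>r < 1\<close> sq
  have "t2 \<le> r" by (rule best_response2_le_share1[OF br2 S(1) r_def[symmetric] \<open>r > 0\<close> sq])
  moreover have t2_eq: "t2 = 3 * r ^ 2"
    by (rule best_response1_foc[OF br1 down[OF S(2)] interior \<open>t1 > 0\<close>])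
  ultimately have "r \<le> 1/3" using \<open>r > 0\<close> by (simp add: power2_eq_square)
  then have "t2 < 1/2" using t2_eq \<open>r > 0\<close> \<open>t2 \<le> r\<close> by simp
  then have "2 * r * (1 - r) = t1 + r ^ 2"
    by (rule best_response2_foc[OF br2 half interior \<open>t1 \<ge> 0\<close>])
  then have "r * (2 - 5 * r) = 0" using sq t2_eq by (simp add: algebra_simps power2_eq_square)
  then show False using \<open>r > 0\<close> \<open>r \<le> 1/3\<close> by simp
qed

theorem mainTheorem15:
  fixes l :: "link \<Rightarrow> real \<Rightarrow> real"
  assumes "l = (\<lambda>i z. if i = L1 then z ^ 2 else 0)"
  shows "Tinf l = {} \<and> (\<forall>c::real. c \<ge> 1/2 \<longrightarrow> Tcap l c = {})"
proof -
  have l: "l = quad_latency" using assms by (simp add: fun_eq_iff quad_latency_def)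
  have "Tinf l = {}"
    unfolding Tinf_def l by (rule tollNE_quad_latency_empty) auto
  moreover have "Tcap l c = {}" if "c \<ge> 1/2" for c
    unfolding Tcap_def l by (rule tollNE_quad_latency_empty) (use that in auto)
  ultimately show ?thesis by blast
qed

end
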